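(* The map $\mathbf w\mapsto\overleftarrow{\tilde{\mathbf w}}$ is a bijection from $\textsc{adm}_B$ onto $\textsc{adm}_F$; i.e. $\mathbf w\in\textsc{adm}_B$ if and only if $\overleftarrow{\tilde{\mathbf w}}\in\textsc{adm}_F$.
   Context: $G=(\mathcal V,\mathcal E)$ is a finite connected simple graph. Model: item classes $V_1,V_2,\dots$ i.i.d. of a full-support law $\mu$ arrive one at a time to an initially empty system; an arriving item is matched with the oldest present item whose class is adjacent to its own (First Come First Matched), if any, both leaving; otherwise it waits. $W_n$ is the word of classes of unmatched items after time $n$. $\tilde{\mathcal V}=\{\tilde a:a\in\mathcal V\}$ is a disjoint copy with $\tilde{\tilde a}=a$, $\mathbf V=\mathcal V\cup\tilde{\mathcal V}$; for $\mathbf w=\mathbf w_1\cdots\mathbf w_q$, $\tilde{\mathbf w}=\tilde{\mathbf w}_1\cdots\tilde{\mathbf w}_q$ and $\overleftarrow{\mathbf w}=\mathbf w_q\cdots\mathbf w_1$. Backwards detailed chain: $B_0=\emptyset$; if $W_n=\emptyset$ then $B_n=\emptyset$; otherwise with $i(n)$ the index of the oldest unmatched item, $B_n$ has length $n-i(n)+1$, $\ell$-th letter $V_{i(n)+\ell-1}$ if that item is unmatched at time $n$ and $\tilde V_k$ if it has been matched by time $n$ with item $k$. Forwards detailed chain: $F_0=\emptyset$; if $W_n=\emptyset$ then $F_n=\emptyset$; otherwise with $j(n)>n$ the largest index of an item matched with an item arrived up to $n$, $F_n$ has length $j(n)-n$, $\ell$-th letter $V_{n+\ell}$ if item $n+\ell$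 is not matched with an item arrived up to $n$ and $\tilde V_k$ if it is matched with item $k\le n$. $\textsc{adm}_B$, $\textsc{adm}_F$ are the sets of states reachable by $(B_n)$, $(F_n)$ respectively. *)

theory Defs
  imports Main
begin

text \<open>Letters of the alphabet V-bold = V plus a disjoint copy V-tilde.\<close>
datatype 'a letter = Pl 'a | Ti 'a

fun tilde :: "'a letter \<Rightarrow> 'a letter" where
  "tilde (Pl a) = Ti a"
| "tilde (Ti a) = Pl a"

text \<open>Items are indexed 1,2,...; item t has class v t.
  run E v n = (queue of unmatched items (index, class) in arrival order,
               list of matched pairs (earlier index, later index)) after n arrivals.\<close>
fun run :: "('a \<Rightarrow> 'a \<Rightarrow> bool) \<Rightarrow> (nat \<Rightarrow> 'a) \<Rightarrow> nat \<Rightarrow> (nat \<times> 'a) list \<times> (nat \<times> nat) list" where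
  "run E v 0 = ([], [])"
| "run E v (Suc n) =
     (let (Q, M) = run E v n; c = v (Suc n) in
      case find (\<lambda>p. E (snd p) c) Q of
        None \<Rightarrow> (Q @ [(Suc n, c)], M)
      | Some p \<Rightarrow> (remove1 p Q, (fst p, Suc n) # M))"

definition unmatched_word :: "('a \<Rightarrow> 'a \<Rightarrow> bool) \<Rightarrow> (nat \<Rightarrow> 'a) \<Rightarrow> nat \<Rightarrow> 'a list" where
  "unmatched_word E v n = map snd (fst (run E v n))"

definition matched_by :: "('a \<Rightarrow> 'a \<Rightarrow> bool) \<Rightarrow> (nat \<Rightarrow> 'a) \<Rightarrow> nat \<Rightarrow> nat \<Rightarrow> nat \<Rightarrow> bool" where
  "matched_by E v n k l \<longleftrightarrow> (k, l) \<in> set (snd (run E v n)) \<or> (l, k) \<in> set (snd (run E v n))"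

definition ever_matched :: "('a \<Rightarrow> 'a \<Rightarrow> bool) \<Rightarrow> (nat \<Rightarrow> 'a) \<Rightarrow> nat \<Rightarrow> nat \<Rightarrow> bool" where
  "ever_matched E v k l \<longleftrightarrow> (\<exists>m. matched_by E v m k l)"

definition Bstate :: "('a \<Rightarrow> 'a \<Rightarrow> bool) \<Rightarrow> (nat \<Rightarrow> 'a) \<Rightarrow> nat \<Rightarrow> 'a letter list" where
  "Bstate E v n =
     (if fst (run E v n) = [] then []
      else map (\<lambda>t. if \<exists>l. matched_by E v n t l
                     then Ti (v (THE l. matched_by E v n t l)) else Pl (v t))
               [fst (hd (fst (run E v n))) ..< Suc n])"

text \<open>F_n is defined when W_n is empty, or when every item unmatched at time n
  is eventually matched (so that j(n) exists).\<close>
definition Fdefined :: "('a \<Rightarrow> 'a \<Rightarrow> bool) \<Rightarrow> (nat \<Rightarrow> 'a) \<Rightarrow> nat \<Rightarrow> bool" where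
  "Fdefined E v n \<longleftrightarrow> (\<forall>p \<in> set (fst (run E v n)). \<exists>l. ever_matched E v (fst p) l)"

definition jidx :: "('a \<Rightarrow> 'a \<Rightarrow> bool) \<Rightarrow> (nat \<Rightarrow> 'a) \<Rightarrow> nat \<Rightarrow> nat" where
  "jidx E v n = Max {l. \<exists>k. 1 \<le> k \<and> k \<le> n \<and> ever_matched E v k l}"

definition Fstate :: "('a \<Rightarrow> 'a \<Rightarrow> bool) \<Rightarrow> (nat \<Rightarrow> 'a) \<Rightarrow> nat \<Rightarrow> 'a letter list" where
  "Fstate E v n =
     (if fst (run E v n) = [] then []
      else map (\<lambda>t. if \<exists>k. 1 \<le> k \<and> k \<le> n \<and> ever_matched E v k t
                     then Ti (v (THE k. 1 \<le> k \<and> k \<le> n \<and> ever_matched E v k t)) else Pl (v t))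
               [Suc n ..< Suc (jidx E v n)])"

text \<open>Reachable states. Since the arrival law has full support on V, a state is reached
  with positive probability iff it is produced by some arrival sequence with values in V.\<close>
definition admB :: "'a set \<Rightarrow> ('a \<Rightarrow> 'a \<Rightarrow> bool) \<Rightarrow> 'a letter list set" where
  "admB V E = {w. \<exists>v n. (\<forall>i. v i \<in> V) \<and> Bstate E v n = w}"

definition admF :: "'a set \<Rightarrow> ('a \<Rightarrow> 'a \<Rightarrow> bool) \<Rightarrow> 'a letter list set" where
  "admF V E = {w. \<exists>v n. (\<forall>i. v i \<in> V) \<and> Fdefined E v n \<and> Fstate E v n = w}"

definition simple_connected_graph :: "'a set \<Rightarrow> ('a \<Rightarrow> 'a \<Rightarrow> bool) \<Rightarrow> bool" where
  "simple_connected_graph V E \<longleftrightarrow>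
     finite V \<and> V \<noteq> {} \<and>
     (\<forall>x y. E x y \<longrightarrow> x \<in> V \<and> y \<in> V) \<and>
     (\<forall>x y. E x y \<longrightarrow> E y x) \<and> (\<forall>x. \<not> E x x) \<and>
     (\<forall>x\<in>V. \<forall>y\<in>V. E\<^sup>*\<^sup>* x y)"

end

theory Submission
  imports Defs
begin

text \<open>
  Both sets of reachable states have explicit descriptions. A backward word is reachable iff it is
  empty, or it starts with an untilded letter and no untilded letter is adjacent to the class of a
  later letter; a forward word is reachable iff it is empty, or it ends with a tilded letter and no
  letter is adjacent to the class of a later tilded letter. Necessity rests on two invariants of
  FCFM: the waiting items form an independent set, and an arrival is matched with the oldest
  compatible waiting item. Sufficiency is by explicit arrival sequences. For a forward word, the
  partners of its tilded letters arrive first, then the letters themselves, a tilded letter as a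
  neighbour of its recorded class (every class has one, the graph being connected with at least two
  vertices). For a backward word, running FCFM on its tilded letters in reverse order pairs some of
  them with each other and leaves an independent set of letters, whose partners then arrive before
  the word. Reversing a word and exchanging tilded and untilded letters swaps the two descriptions,
  and this map is an involution.
\<close>

section \<open>Letters and the two descriptions\<close>

fun letter_class :: "'a letter \<Rightarrow> 'a" where
  "letter_class (Pl a) = a"
| "letter_class (Ti a) = a"

fun is_Pl :: "'a letter \<Rightarrow> bool" where
  "is_Pl (Pl a) = True"
| "is_Pl (Ti a) = False"

lemma letter_class_tilde [simp]: "letter_class (tilde x) = letter_class x"
  by (cases x) auto

lemma is_Pl_tilde [simp]: "is_Pl (tilde x) \<longleftrightarrow> \<not> is_Pl x"
  by (cases x) auto

lemma tilde_tilde [simp]: "tilde (tilde x) = x"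
  by (cases x) auto

lemma Pl_letter_class: "is_Pl x \<Longrightarrow> Pl (letter_class x) = x"
  by (cases x) auto

lemma Ti_letter_class: "\<not> is_Pl x \<Longrightarrow> Ti (letter_class x) = x"
  by (cases x) auto

definition B_admissible :: "'a set \<Rightarrow> ('a \<Rightarrow> 'a \<Rightarrow> bool) \<Rightarrow> 'a letter list \<Rightarrow> bool" where
  "B_admissible V E w \<longleftrightarrow> w = [] \<or>
     (is_Pl (hd w) \<and> letter_class ` set w \<subseteq> V \<and>
      sorted_wrt (\<lambda>a b. is_Pl a \<longrightarrow> \<not> E (letter_class a) (letter_class b)) w)"

definition F_admissible :: "'a set \<Rightarrow> ('a \<Rightarrow> 'a \<Rightarrow> bool) \<Rightarrow> 'a letter list \<Rightarrow> bool" where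
  "F_admissible V E u \<longleftrightarrow> u = [] \<or>
     (\<not> is_Pl (last u) \<and> letter_class ` set u \<subseteq> V \<and>
      sorted_wrt (\<lambda>a b. \<not> is_Pl b \<longrightarrow> \<not> E (letter_class a) (letter_class b)) u)"

lemma B_admissible_iff_F_admissible:
  assumes "\<And>x y. E x y \<Longrightarrow> E y x"
  shows "B_admissible V E w \<longleftrightarrow> F_admissible V E (rev (map tilde w))"
proof -
  have "(\<lambda>a b. is_Pl a \<longrightarrow> \<not> E (letter_class b) (letter_class a))
      = (\<lambda>a b. is_Pl a \<longrightarrow> \<not> E (letter_class a) (letter_class b))"
    using assms by blast
  then have "sorted_wrt (\<lambda>a b. \<not> is_Pl b \<longrightarrow> \<not> E (letter_class a) (letter_class b)) (rev (map tilde w))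
      \<longleftrightarrow> sorted_wrt (\<lambda>a b. is_Pl a \<longrightarrow> \<not> E (letter_class a) (letter_class b)) w"
    by (simp add: sorted_wrt_rev sorted_wrt_map)
  then show ?thesis
    unfolding B_admissible_def F_admissible_def
    by (cases "w = []") (simp_all add: last_rev hd_map image_image)
qed

lemma sorted_wrt_map_upt:
  "sorted_wrt R (map f [a..<b]) \<longleftrightarrow> (\<forall>s t. a \<le> s \<longrightarrow> s < t \<longrightarrow> t < b \<longrightarrow> R (f s) (f t))"
proof -
  have "sorted_wrt R (map f [a..<b]) \<longleftrightarrow> (\<forall>i j. i < j \<longrightarrow> j < b - a \<longrightarrow> R (f (a + i)) (f (a + j)))"
    by (simp add: sorted_wrt_map sorted_wrt_iff_nth_less)
  also have "\<dots> \<longleftrightarrow> (\<forall>s t. a \<le> s \<longrightarrow> s < t \<longrightarrow> t < b \<longrightarrow> R (f s) (f t))"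
  proof (intro iffI allI impI)
    fix s t assume H: "\<forall>i j. i < j \<longrightarrow> j < b - a \<longrightarrow> R (f (a + i)) (f (a + j))"
      and st: "a \<le> s" "s < t" "t < b"
    have "s - a < t - a" "t - a < b - a" using st by auto
    then have "R (f (a + (s - a))) (f (a + (t - a)))" using H by blast
    then show "R (f s) (f t)" using st by simp
  qed simp
  finally show ?thesis .
qed

section \<open>Rank and select\<close>

definition rank :: "(nat \<Rightarrow> bool) \<Rightarrow> nat \<Rightarrow> nat" where
  "rank P i = card {j. j < i \<and> P j}"

definition select :: "(nat \<Rightarrow> bool) \<Rightarrow> nat \<Rightarrow> nat" where
  "select P k = (THE i. P i \<and> rank P i = k)"

lemma rank_0 [simp]: "rank P 0 = 0"
  by (simp add: rank_def)

lemma rank_Suc: "rank P (Suc i) = (if P i then Suc (rank P i) else rank P i)"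
proof -
  have "{j. j < Suc i \<and> P j} = (if P i then insert i {j. j < i \<and> P j} else {j. j < i \<and> P j})"
    by (auto simp: less_Suc_eq)
  then show ?thesis
    by (simp add: rank_def)
qed

lemma rank_mono: "i \<le> i' \<Longrightarrow> rank P i \<le> rank P i'"
  unfolding rank_def by (rule card_mono) auto

lemma rank_less: "i < i' \<Longrightarrow> P i \<Longrightarrow> rank P i < rank P i'"
  using rank_mono[of "Suc i" i' P] by (simp add: rank_Suc)

lemma rank_less_iff: "P i \<Longrightarrow> P j \<Longrightarrow> rank P i < rank P j \<longleftrightarrow> i < j"
  by (metis rank_less less_asym nat_neq_iff)

lemma rank_inj: "P i \<Longrightarrow> P j \<Longrightarrow> rank P i = rank P j \<Longrightarrow> i = j"
  by (metis rank_less less_irrefl nat_neq_iff)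

lemma rank_attained: "k < rank P s \<Longrightarrow> \<exists>i<s. P i \<and> rank P i = k"
proof (induction s)
  case (Suc s)
  then show ?case
    by (cases "k < rank P s") (auto simp: rank_Suc less_Suc_eq split: if_splits)
qed simp

lemma select_rank: "P i \<Longrightarrow> select P (rank P i) = i"
  unfolding select_def by (rule the_equality) (use rank_inj in blast)+

lemma select_less_rank:
  assumes "k < rank P s"
  shows "P (select P k)" "rank P (select P k) = k" "select P k < s"
  using rank_attained[OF assms] select_rank by metis+

lemma select_strict_mono: "i < j \<Longrightarrow> j < rank P s \<Longrightarrow> select P i < select P j"
  using select_less_rank[of i P s] select_less_rank[of j P s] rank_less_iff by (metis less_trans)

section \<open>The FCFM dynamics\<close>

lemma sorted_wrt_remove1: "sorted_wrt P xs \<Longrightarrow> sorted_wrt P (remove1 x xs)"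
  by (induction xs) (auto dest: subsetD[OF set_remove1_subset])

declare run.simps(2) [simp del]

locale fcfm =
  fixes E :: "'a \<Rightarrow> 'a \<Rightarrow> bool" and v :: "nat \<Rightarrow> 'a"
  assumes sym: "E x y \<Longrightarrow> E y x" and irrefl: "\<not> E x x"
begin

abbreviation queue :: "nat \<Rightarrow> (nat \<times> 'a) list" where
  "queue n \<equiv> fst (run E v n)"

abbreviation matches :: "nat \<Rightarrow> (nat \<times> nat) list" where
  "matches n \<equiv> snd (run E v n)"

abbreviation waiting :: "nat \<Rightarrow> nat set" where
  "waiting n \<equiv> fst ` set (queue n)"

lemma run_Suc_cases:
  obtains (stay) "find (\<lambda>p. E (snd p) (v (Suc n))) (queue n) = None"
      "queue (Suc n) = queue n @ [(Suc n, v (Suc n))]" "matches (Suc n) = matches n"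
  | (match) p where "find (\<lambda>p. E (snd p) (v (Suc n))) (queue n) = Some p"
      "queue (Suc n) = remove1 p (queue n)" "matches (Suc n) = (fst p, Suc n) # matches n"
  by (cases "find (\<lambda>p. E (snd p) (v (Suc n))) (queue n)") (simp_all add: run.simps(2) case_prod_beta Let_def)

lemma queue_entry: "(t, x) \<in> set (queue n) \<Longrightarrow> x = v t \<and> 1 \<le> t \<and> t \<le> n"
proof (induction n arbitrary: t x)
  case (Suc n)
  show ?case
  proof (cases n rule: run_Suc_cases)
    case stay
    then show ?thesis
      using Suc by (auto dest: le_SucI)
  next
    case (match q)
    then have "(t, x) \<in> set (queue n)"
      using Suc.prems set_remove1_subset by (metis subsetD)
    then show ?thesis
      using Suc.IH by fastforce
  qed
qed simp

lemma waiting_iff: "t \<in> waiting n \<longleftrightarrow> (t, v t) \<in> set (queue n)"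
  using queue_entry by force

lemma waiting_bounds: "t \<in> waiting n \<Longrightarrow> 1 \<le> t \<and> t \<le> n"
  using queue_entry by force

lemma queue_sorted: "sorted_wrt (\<lambda>p q. fst p < fst q) (queue n)"
proof (induction n)
  case (Suc n)
  show ?case
    by (cases n rule: run_Suc_cases)
      (use Suc queue_entry in \<open>force simp: sorted_wrt_append intro: sorted_wrt_remove1\<close>)+
qed simp

lemma distinct_waiting: "distinct (map fst (queue n))"
proof -
  have "sorted_wrt (<) (map fst (queue n))"
    using queue_sorted[of n] by (simp add: sorted_wrt_map)
  then show ?thesis
    by (simp add: strict_sorted_iff)
qed

lemma waiting_independent: "s \<in> waiting n \<Longrightarrow> t \<in> waiting n \<Longrightarrow> \<not> E (v s) (v t)"
proof (induction n arbitrary: s t)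
  case (Suc n)
  show ?case
  proof (cases n rule: run_Suc_cases)
    case stay
    then have "\<not> E (v t) (v (Suc n))" if "t \<in> waiting n" for t
      using that by (auto simp: find_None_iff waiting_iff)
    moreover have "waiting (Suc n) = insert (Suc n) (waiting n)"
      using stay(2) by simp
    ultimately show ?thesis
      using Suc.prems Suc.IH sym irrefl by (metis insert_iff)
  next
    case (match p)
    then show ?thesis
      using Suc set_remove1_subset by fastforce
  qed
qed simp

lemma waiting_Suc_cases:
  obtains (stay) "\<forall>t\<in>waiting n. \<not> E (v t) (v (Suc n))"
      "waiting (Suc n) = insert (Suc n) (waiting n)" "matches (Suc n) = matches n"
  | (match) t where "t \<in> waiting n" "E (v t) (v (Suc n))"
      "\<forall>t'\<in>waiting n. t' < t \<longrightarrow> \<not> E (v t') (v (Suc n))"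
      "waiting (Suc n) = waiting n - {t}" "matches (Suc n) = (t, Suc n) # matches n"
proof (cases n rule: run_Suc_cases)
  case stay
  have "\<not> E (v t) (v (Suc n))" if "t \<in> waiting n" for t
    using stay(1) that unfolding find_None_iff waiting_iff by fastforce
  moreover have "waiting (Suc n) = insert (Suc n) (waiting n)"
    using stay(2) by simp
  ultimately show ?thesis
    using that(1) stay(3) by blast
next
  case (match p)
  obtain i where i: "i < length (queue n)" "p = queue n ! i" "E (snd p) (v (Suc n))"
    "\<forall>j<i. \<not> E (snd (queue n ! j)) (v (Suc n))"
    using match(1) unfolding find_Some_iff by blast
  have pin: "p \<in> set (queue n)"
    using i(1,2) nth_mem by blast
  have p: "snd p = v (fst p)"
    using queue_entry[of "fst p" "snd p" n] pin by simp
  have oldest: "\<not> E (v t') (v (Suc n))" if t': "t' \<in> waiting n" "t' < fst p" for t'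
  proof -
    obtain j where j: "j < length (queue n)" "queue n ! j = (t', v t')"
      using t'(1) unfolding waiting_iff in_set_conv_nth by blast
    have "\<not> i < j" "i \<noteq> j"
      using sorted_wrt_nth_less[OF queue_sorted, of i j n] i(2) j t'(2) by auto
    then show ?thesis
      using i(4) j(2) by (metis linorder_neqE_nat snd_conv)
  qed
  have "inj_on fst (set (queue n))" "distinct (queue n)"
    using distinct_waiting[of n] by (simp_all add: distinct_map)
  then have "waiting (Suc n) = waiting n - {fst p}"
    using match(2) pin by (simp add: inj_on_image_set_diff)
  moreover have "E (v (fst p)) (v (Suc n))"
    using i(3) p by simp
  ultimately show ?thesis
    using that(2)[of "fst p"] match(3) pin oldest by blast
qed

lemma waiting_Suc_unmatched:
  "\<forall>t\<in>waiting n. \<not> E (v t) (v (Suc n)) \<Longrightarrow> waiting (Suc n) = insert (Suc n) (waiting n)"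
  by (cases n rule: waiting_Suc_cases) auto

lemma waiting_Suc_matched:
  assumes "t \<in> waiting n" "E (v t) (v (Suc n))" "\<forall>t'\<in>waiting n. t' < t \<longrightarrow> \<not> E (v t') (v (Suc n))"
  shows "waiting (Suc n) = waiting n - {t} \<and> matched_by E v (Suc n) t (Suc n)"
proof (cases n rule: waiting_Suc_cases)
  case (match t')
  have "t' = t"
    using assms match by (metis not_less_iff_gr_or_eq)
  then show ?thesis
    using match by (simp add: matched_by_def)
qed (use assms in blast)

lemma matches_mono: "n \<le> n' \<Longrightarrow> set (matches n) \<subseteq> set (matches n')"
proof (induction n' rule: dec_induct)
  case (step m)
  then show ?case
    by (cases m rule: waiting_Suc_cases) auto
qed simp

lemma matched_by_mono: "matched_by E v n k l \<Longrightarrow> n \<le> n' \<Longrightarrow> matched_by E v n' k l"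
  unfolding matched_by_def using matches_mono by blast

lemma matched_by_sym: "matched_by E v n k l \<longleftrightarrow> matched_by E v n l k"
  unfolding matched_by_def by blast

lemma match_arrival:
  "(k, l) \<in> set (matches n) \<Longrightarrow>
     1 \<le> k \<and> k < l \<and> l \<le> n \<and> k \<in> waiting (l - 1) \<and> E (v k) (v l) \<and>
     (\<forall>t\<in>waiting (l - 1). t < k \<longrightarrow> \<not> E (v t) (v l)) \<and> (k, l) \<in> set (matches l)"
proof (induction n)
  case (Suc n)
  show ?case
  proof (cases n rule: waiting_Suc_cases)
    case (match t)
    show ?thesis
    proof (cases "(k, l) = (t, Suc n)")
      case True
      moreover have "1 \<le> t \<and> t \<le> n"
        using match(1) waiting_bounds by blast
      ultimately show ?thesis
        using match by auto
    qed (use Suc match in auto)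
  qed (use Suc in auto)
qed simp


lemma matched_by_bounds: "matched_by E v n t l \<Longrightarrow> 1 \<le> t \<and> t \<le> n \<and> 1 \<le> l \<and> l \<le> n"
  unfolding matched_by_def using match_arrival by fastforce

lemma waiting_iff_unmatched:
  "1 \<le> t \<Longrightarrow> t \<le> n \<Longrightarrow> t \<in> waiting n \<longleftrightarrow> \<not> (\<exists>l. matched_by E v n t l)"
proof (induction n arbitrary: t)
  case (Suc n)
  show ?case
  proof (cases n rule: waiting_Suc_cases)
    case stay
    have "matched_by E v (Suc n) t l \<longleftrightarrow> matched_by E v n t l" for l
      using stay(3) by (simp add: matched_by_def)
    then show ?thesis
      using Suc stay(2) by (cases "t = Suc n") (auto dest: matched_by_bounds queue_entry)
  next
    case (match t')
    have "matched_by E v (Suc n) t l \<longleftrightarrow> matched_by E v n t l \<or> {t, l} = {t', Suc n}" for l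
      using match(5) by (auto simp: matched_by_def doubleton_eq_iff)
    moreover have "t' \<le> n" "1 \<le> t'"
      using match(1) waiting_bounds by blast+
    moreover have "\<not> matched_by E v n t' l" for l
      using Suc.IH[of t'] match(1) \<open>t' \<le> n\<close> \<open>1 \<le> t'\<close> by blast
    ultimately show ?thesis
      using Suc match(4)
      by (cases "t = Suc n"; cases "t = t'") (auto simp: doubleton_eq_iff dest: matched_by_bounds queue_entry)
  qed
qed simp

lemma matches_disjoint:
  assumes "(k, l) \<in> set (matches n)" "(k', l') \<in> set (matches n)"
    and "k = k' \<or> k = l' \<or> l = k' \<or> l = l'"
  shows "k = k' \<and> l = l'"
  using assms
proof (induction n)
  case (Suc n)
  show ?case
  proof (cases n rule: waiting_Suc_cases)
    case (match t)
    have fresh: "t \<noteq> a \<and> t \<noteq> b \<and> Suc n \<noteq> a \<and> Suc n \<noteq> b" if "(a, b) \<in> set (matches n)" for a b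
    proof -
      have "matched_by E v n a b" "matched_by E v n b a"
        using that by (auto simp: matched_by_def)
      moreover have "1 \<le> t" "t \<le> n"
        using match(1) waiting_bounds by blast+
      ultimately show ?thesis
        using match(1) waiting_iff_unmatched matched_by_bounds by (metis Suc_n_not_le_n)
    qed
    show ?thesis
      using Suc match(5) by (auto dest: fresh)
  qed (use Suc in auto)
qed simp

lemma matched_by_unique:
  assumes "matched_by E v n t l" "matched_by E v n' t l'"
  shows "l = l'"
proof -
  have "matched_by E v (max n n') t l" "matched_by E v (max n n') t l'"
    using assms matched_by_mono by simp_all
  then show ?thesis
    unfolding matched_by_def using matches_disjoint by blast
qed

lemma ever_matched_unique: "ever_matched E v t l \<Longrightarrow> ever_matched E v t l' \<Longrightarrow> l = l'"
  unfolding ever_matched_def using matched_by_unique by blast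

lemma ever_matched_sym: "ever_matched E v t l \<longleftrightarrow> ever_matched E v l t"
  unfolding ever_matched_def using matched_by_sym by blast

lemma ever_matched_ordered: "ever_matched E v k l \<Longrightarrow> k < l \<Longrightarrow> (k, l) \<in> set (matches l)"
  unfolding ever_matched_def matched_by_def using match_arrival by fastforce

lemma waiting_earlier:
  assumes "t \<in> waiting n" "t \<le> m" "m \<le> n"
  shows "t \<in> waiting m"
proof -
  have "1 \<le> t" "\<not> (\<exists>l. matched_by E v n t l)"
    using assms waiting_bounds waiting_iff_unmatched by blast+
  then show ?thesis
    using assms(2,3) waiting_iff_unmatched matched_by_mono by blast
qed

lemma waiting_until_matched:
  assumes "(k, l) \<in> set (matches N)" "k \<le> n" "n < l"
  shows "k \<in> waiting n"
proof -
  have "k \<in> waiting (l - 1)"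
    using match_arrival[OF assms(1)] by blast
  then show ?thesis
    using waiting_earlier assms(2,3) by simp
qed

lemma hd_queue_le:
  assumes "t \<in> waiting n"
  shows "fst (hd (queue n)) \<le> t"
proof -
  obtain x xs where q: "queue n = x # xs"
    using assms by (cases "queue n") auto
  have "(t, v t) \<in> set (queue n)"
    using assms waiting_iff by blast
  then show ?thesis
    using queue_sorted[of n] unfolding q by auto
qed

lemma match_partner_not_adjacent:
  assumes "matched_by E v n x y" "c \<in> waiting (max x y - 1)" "c < x"
  shows "\<not> E (v c) (v y)"
proof (cases "y < x")
  case True
  then have "(y, x) \<in> set (matches n)"
    using assms(1) match_arrival unfolding matched_by_def by fastforce
  then have "y \<in> waiting (x - 1)"
    using match_arrival by blast
  then show ?thesis
    using assms(2) True waiting_independent by simp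
next
  case False
  then have "(x, y) \<in> set (matches n)"
    using assms(1) match_arrival unfolding matched_by_def by fastforce
  then have "\<forall>t\<in>waiting (y - 1). t < x \<longrightarrow> \<not> E (v t) (v y)"
    using match_arrival by blast
  moreover have "c \<in> waiting (y - 1)"
    using assms(2) False by (simp add: max_def)
  ultimately show ?thesis
    using assms(3) by blast
qed

lemma adjacent_arrival_matched:
  assumes "k \<in> waiting n" "E (v k) (v (Suc n))"
  obtains k' where "1 \<le> k'" "k' \<le> k" "matched_by E v (Suc n) k' (Suc n)"
proof (cases n rule: waiting_Suc_cases)
  case (match k')
  have "k' \<le> k"
    using match(3) assms by (meson not_le)
  moreover have "1 \<le> k'"
    using match(1) waiting_bounds by blast
  moreover have "matched_by E v (Suc n) k' (Suc n)"
    using match(5) unfolding matched_by_def by simp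
  ultimately show ?thesis
    using that by blast
qed (use assms in blast)

section \<open>Reachable states satisfy the descriptions\<close>

definition backward_letter :: "nat \<Rightarrow> nat \<Rightarrow> 'a letter" where
  "backward_letter n t =
     (if \<exists>l. matched_by E v n t l then Ti (v (THE l. matched_by E v n t l)) else Pl (v t))"

lemma Bstate_eq:
  "queue n \<noteq> [] \<Longrightarrow> Bstate E v n = map (backward_letter n) [fst (hd (queue n))..<Suc n]"
  unfolding Bstate_def backward_letter_def by simp

lemma backward_letter_matched: "matched_by E v n t l \<Longrightarrow> backward_letter n t = Ti (v l)"
  unfolding backward_letter_def using matched_by_unique by (metis theI)

lemma backward_letter_unmatched: "\<not> (\<exists>l. matched_by E v n t l) \<Longrightarrow> backward_letter n t = Pl (v t)"
  unfolding backward_letter_def by simp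

lemma waiting_not_adjacent_later:
  assumes s: "s \<in> waiting n" and st: "s < t" "t \<le> n"
  shows "\<not> E (v s) (letter_class (backward_letter n t))"
proof (cases "\<exists>l. matched_by E v n t l")
  case False
  have "1 \<le> s"
    using s waiting_bounds by blast
  then have "1 \<le> t"
    using st by linarith
  then have "t \<in> waiting n"
    using False st waiting_iff_unmatched[of t n] by blast
  then show ?thesis
    using waiting_independent[OF s] backward_letter_unmatched[OF False] by simp
next
  case True
  then obtain l where l: "matched_by E v n t l" by blast
  then consider "(t, l) \<in> set (matches n)" | "(l, t) \<in> set (matches n)"
    unfolding matched_by_def by blast
  then have "\<not> E (v s) (v l)"
  proof cases
    case 1
    then have "t < l" "l \<le> n"
      using match_arrival by blast+
    then have "s \<in> waiting (l - 1)"
      using waiting_earlier[OF s, of "l - 1"] st by simp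
    then show ?thesis using 1 match_arrival st by blast
  next
    case 2
    with match_arrival[OF this] have "s \<in> waiting (t - 1)" "l \<in> waiting (t - 1)"
      using waiting_earlier s st by simp_all
    then show ?thesis using waiting_independent by blast
  qed
  then show ?thesis
    using backward_letter_matched[OF l] by simp
qed

lemma is_Pl_backward_letter:
  "is_Pl (backward_letter n t) \<longleftrightarrow> \<not> (\<exists>l. matched_by E v n t l)"
  "is_Pl (backward_letter n t) \<Longrightarrow> letter_class (backward_letter n t) = v t"
  unfolding backward_letter_def by (auto split: if_splits)

lemma B_admissible_Bstate:
  assumes "\<And>i. v i \<in> V"
  shows "B_admissible V E (Bstate E v n)"
proof (cases "queue n = []")
  case False
  define i0 where "i0 = fst (hd (queue n))"
  have i0: "i0 \<in> waiting n"
    using False unfolding i0_def by simp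
  have i0_bounds: "1 \<le> i0" "i0 \<le> n"
    using i0 waiting_bounds by blast+
  have Pl_waiting: "s \<in> waiting n" if "i0 \<le> s" "s \<le> n" "is_Pl (backward_letter n s)" for s
  proof -
    have "1 \<le> s"
      using that(1) i0_bounds by linarith
    then show ?thesis
      using that(2,3) waiting_iff_unmatched is_Pl_backward_letter(1) by blast
  qed
  have "hd (map (backward_letter n) [i0..<Suc n]) = backward_letter n i0"
    using i0_bounds by (simp add: upt_rec)
  moreover have "is_Pl (backward_letter n i0)"
    using i0 i0_bounds waiting_iff_unmatched is_Pl_backward_letter(1) by blast
  ultimately have hd: "is_Pl (hd (map (backward_letter n) [i0..<Suc n]))"
    by simp
  have classes: "letter_class (backward_letter n t) \<in> V" for t
    using assms by (simp add: backward_letter_def)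
  have pairwise: "\<not> E (letter_class (backward_letter n s)) (letter_class (backward_letter n t))"
    if "i0 \<le> s" "s < t" "t < Suc n" "is_Pl (backward_letter n s)" for s t
    using that Pl_waiting[of s] waiting_not_adjacent_later[of s n t] is_Pl_backward_letter(2)
    by simp
  show ?thesis
    unfolding B_admissible_def Bstate_eq[OF False] i0_def[symmetric] sorted_wrt_map_upt
    using hd classes pairwise by auto
next
  case True
  then show ?thesis
    unfolding Bstate_def B_admissible_def by (simp only: if_True) simp
qed

definition forward_letter :: "nat \<Rightarrow> nat \<Rightarrow> 'a letter" where
  "forward_letter n t =
     (if \<exists>k. 1 \<le> k \<and> k \<le> n \<and> ever_matched E v k t
      then Ti (v (THE k. 1 \<le> k \<and> k \<le> n \<and> ever_matched E v k t)) else Pl (v t))"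

lemma Fstate_eq:
  "queue n \<noteq> [] \<Longrightarrow> Fstate E v n = map (forward_letter n) [Suc n..<Suc (jidx E v n)]"
  unfolding Fstate_def forward_letter_def by simp

lemma forward_letter_matched:
  assumes "1 \<le> k" "k \<le> n" "ever_matched E v k t"
  shows "forward_letter n t = Ti (v k)"
proof -
  have "(THE k. 1 \<le> k \<and> k \<le> n \<and> ever_matched E v k t) = k"
    using assms ever_matched_unique ever_matched_sym by blast
  then show ?thesis
    using assms unfolding forward_letter_def by auto
qed

lemma forward_letter_unmatched:
  "\<not> (\<exists>k. 1 \<le> k \<and> k \<le> n \<and> ever_matched E v k t) \<Longrightarrow> forward_letter n t = Pl (v t)"
  unfolding forward_letter_def by simp

lemma ever_matched_by:
  assumes "ever_matched E v k l" "k \<le> n" "l \<le> n"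
  shows "matched_by E v n k l"
proof (cases "k < l")
  case True
  then have "(k, l) \<in> set (matches n)"
    using assms ever_matched_ordered matches_mono by blast
  then show ?thesis
    by (simp add: matched_by_def)
next
  case False
  then have "l < k"
    using assms(1) ever_matched_def matched_by_bounds match_arrival
    unfolding matched_by_def by (metis less_irrefl nat_neq_iff)
  then have "(l, k) \<in> set (matches n)"
    using assms ever_matched_ordered ever_matched_sym matches_mono by blast
  then show ?thesis
    by (simp add: matched_by_def)
qed

lemma jidx_matched:
  assumes "Fdefined E v n" "queue n \<noteq> []"
  shows "n < jidx E v n" "\<exists>k. 1 \<le> k \<and> k \<le> n \<and> ever_matched E v k (jidx E v n)"
proof -
  define S where "S = {l. \<exists>k. 1 \<le> k \<and> k \<le> n \<and> ever_matched E v k l}"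
  have "S \<subseteq> (\<lambda>k. THE l. ever_matched E v k l) ` {1..n}"
  proof
    fix l assume "l \<in> S"
    then obtain k where k: "1 \<le> k" "k \<le> n" "ever_matched E v k l"
      unfolding S_def by blast
    then have "(THE l. ever_matched E v k l) = l"
      using ever_matched_unique by blast
    then show "l \<in> (\<lambda>k. THE l. ever_matched E v k l) ` {1..n}"
      using k by force
  qed
  then have "finite S"
    by (rule finite_subset) simp
  obtain t where t: "t \<in> waiting n"
    using assms(2) by (cases "queue n") auto
  then obtain l where l: "ever_matched E v t l"
    using assms(1) unfolding Fdefined_def by blast
  have t_bounds: "1 \<le> t" "t \<le> n"
    using t waiting_bounds by blast+
  have "\<not> l \<le> n"
  proof
    assume "l \<le> n"
    then have "matched_by E v n t l"
      using ever_matched_by l t_bounds by blast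
    then show False
      using t t_bounds waiting_iff_unmatched by blast
  qed
  moreover have "l \<in> S"
    using l t_bounds unfolding S_def by blast
  moreover have "jidx E v n = Max S"
    unfolding jidx_def S_def ..
  ultimately show "n < jidx E v n" "\<exists>k. 1 \<le> k \<and> k \<le> n \<and> ever_matched E v k (jidx E v n)"
    using Max_ge[OF \<open>finite S\<close>, of l] Max_in[OF \<open>finite S\<close>] unfolding S_def by auto
qed

lemma not_adjacent_earlier_partner:
  assumes "n < s" "s < t" "1 \<le> k" "k \<le> n" "ever_matched E v k t"
  shows "\<not> E (letter_class (forward_letter n s)) (v k)"
proof -
  have "(k, t) \<in> set (matches t)"
    using assms ever_matched_ordered by simp
  then have k_waiting: "k \<in> waiting (s - 1)"
    using assms waiting_until_matched by simp
  show ?thesis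
  proof (cases "\<exists>k'. 1 \<le> k' \<and> k' \<le> n \<and> ever_matched E v k' s")
    case True
    then obtain k' where k': "1 \<le> k'" "k' \<le> n" "ever_matched E v k' s" by blast
    have "k' \<in> waiting (s - 1)"
      using k' assms ever_matched_ordered match_arrival by fastforce
    moreover have "k' \<noteq> k"
      using k' assms ever_matched_unique ever_matched_sym by blast
    ultimately show ?thesis
      using k_waiting waiting_independent forward_letter_matched[OF k'] by (metis letter_class.simps(2))
  next
    case False
    obtain s' where s': "s = Suc s'"
      using assms(1) by (cases s) auto
    show ?thesis
    proof
      assume "E (letter_class (forward_letter n s)) (v k)"
      then have "E (v k) (v (Suc s'))"
        using False forward_letter_unmatched s' sym by simp
      then obtain k' where "1 \<le> k'" "k' \<le> k" "matched_by E v s k' s"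
        using adjacent_arrival_matched[of k s'] k_waiting s' by auto
      then show False
        using False assms(4) unfolding ever_matched_def by auto
    qed
  qed
qed

lemma F_admissible_Fstate:
  assumes "\<And>i. v i \<in> V" "Fdefined E v n"
  shows "F_admissible V E (Fstate E v n)"
proof (cases "queue n = []")
  case False
  define j where "j = jidx E v n"
  obtain k where k: "1 \<le> k" "k \<le> n" "ever_matched E v k j"
    using jidx_matched[OF assms(2) False] unfolding j_def by blast
  have "n < j"
    using jidx_matched[OF assms(2) False] unfolding j_def by blast
  have last: "\<not> is_Pl (last (map (forward_letter n) [Suc n..<Suc j]))"
    using \<open>n < j\<close> forward_letter_matched[OF k] by simp
  have classes: "letter_class (forward_letter n t) \<in> V" for t
    using assms(1) by (simp add: forward_letter_def)
  have pairwise: "\<not> E (letter_class (forward_letter n s)) (letter_class (forward_letter n t))"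
    if st: "Suc n \<le> s" "s < t" "t < Suc j" "\<not> is_Pl (forward_letter n t)" for s t
  proof -
    obtain k' where k': "1 \<le> k'" "k' \<le> n" "ever_matched E v k' t"
      using st(4) forward_letter_unmatched[of n t] by (metis is_Pl.simps(1))
    then show ?thesis
      using not_adjacent_earlier_partner[of n s t k'] st forward_letter_matched[OF k'] by simp
  qed
  show ?thesis
    unfolding F_admissible_def Fstate_eq[OF False] j_def[symmetric] sorted_wrt_map_upt
    using last classes pairwise by auto
next
  case True
  then show ?thesis
    unfolding Fstate_def F_admissible_def by simp
qed

end

section \<open>Realising forward words\<close>

locale F_construction =
  fixes V :: "'a set" and E :: "'a \<Rightarrow> 'a \<Rightarrow> bool" and nb :: "'a \<Rightarrow> 'a"
    and u :: "'a letter list"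
  assumes sym: "E x y \<Longrightarrow> E y x" and irrefl: "\<not> E x x"
    and nb: "b \<in> V \<Longrightarrow> nb b \<in> V \<and> E b (nb b)"
    and admissible: "F_admissible V E u" and nonempty: "u \<noteq> []"
begin

abbreviation cls :: "nat \<Rightarrow> 'a" where
  "cls i \<equiv> letter_class (u ! i)"

definition tilded :: "nat \<Rightarrow> bool" where
  "tilded i \<longleftrightarrow> i < length u \<and> \<not> is_Pl (u ! i)"

abbreviation r :: nat where
  "r \<equiv> rank tilded (length u)"

text \<open>
  Items \<open>1..r\<close> are the partners of the tilded letters of \<open>u\<close>, in order; items
  \<open>r + 1 .. r + length u\<close> are the letters of \<open>u\<close>, a tilded letter arriving as a neighbour of
  its recorded class.
\<close>

definition arrivals :: "nat \<Rightarrow> 'a" where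
  "arrivals t =
     (if 1 \<le> t \<and> t \<le> r then cls (select tilded (t - 1))
      else if r < t \<and> t \<le> r + length u then
        (if is_Pl (u ! (t - r - 1)) then cls (t - r - 1) else nb (cls (t - r - 1)))
      else cls 0)"

lemma cls_in_V: "i < length u \<Longrightarrow> cls i \<in> V"
  using admissible nonempty unfolding F_admissible_def by auto

lemma tilded_last: "tilded (length u - 1)"
  using admissible nonempty unfolding F_admissible_def tilded_def by (simp add: last_conv_nth)

lemma not_adjacent_tilded: "i < j \<Longrightarrow> tilded j \<Longrightarrow> \<not> E (cls i) (cls j)"
  using admissible nonempty unfolding F_admissible_def tilded_def sorted_wrt_iff_nth_less by blast

lemma arrivals_past: "1 \<le> t \<Longrightarrow> t \<le> r \<Longrightarrow> arrivals t = cls (select tilded (t - 1))"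
  unfolding arrivals_def by simp

lemma arrivals_future:
  "i < length u \<Longrightarrow> arrivals (Suc (r + i)) = (if is_Pl (u ! i) then cls i else nb (cls i))"
  unfolding arrivals_def by simp

lemma arrivals_in_V: "arrivals t \<in> V"
proof -
  have "select tilded (t - 1) < length u" if "1 \<le> t" "t \<le> r"
    using that select_less_rank[of "t - 1" tilded "length u"] by simp
  then show ?thesis
    unfolding arrivals_def using cls_in_V nb nonempty by auto
qed

sublocale fcfm E arrivals
  using sym irrefl by unfold_locales

lemma waiting_past: "t \<le> r \<Longrightarrow> waiting t = {1..t}"
proof (induction t)
  case (Suc t)
  have "\<not> E (arrivals x) (arrivals (Suc t))" if "x \<in> {1..t}" for x
  proof -
    have "x - 1 < t" "t < r"
      using that Suc.prems by auto
    then have "select tilded (x - 1) < select tilded t" "tilded (select tilded t)"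
      using select_strict_mono select_less_rank(1) by blast+
    then show ?thesis
      using that Suc.prems arrivals_past not_adjacent_tilded by simp
  qed
  moreover have "waiting t = {1..t}"
    using Suc by simp
  ultimately have "waiting (Suc t) = insert (Suc t) (waiting t)"
    by (intro waiting_Suc_unmatched ballI) auto
  then show ?case
    using \<open>waiting t = {1..t}\<close> by (simp add: atLeastAtMostSuc_conv)
qed simp

lemma rank_tilded_less: "tilded i \<Longrightarrow> rank tilded i < r"
  using rank_less[of i "length u" tilded] unfolding tilded_def by simp

lemma arrivals_partner: "tilded i \<Longrightarrow> arrivals (Suc (rank tilded i)) = cls i"
  using arrivals_past[of "Suc (rank tilded i)"] rank_tilded_less[of i] select_rank[of tilded i]
  by simp

lemma window_step_tilded:
  assumes s: "tilded s"
    and inv: "waiting (r + s) \<inter> {1..r} = {x. rank tilded s < x \<and> x \<le> r}"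
  shows "waiting (r + Suc s) \<inter> {1..r} = {x. rank tilded (Suc s) < x \<and> x \<le> r}"
    and "matched_by E arrivals (Suc (r + s)) (Suc (rank tilded s)) (Suc (r + s))"
proof -
  define x where "x = Suc (rank tilded s)"
  have "x \<in> waiting (r + s) \<inter> {1..r}"
    using inv rank_tilded_less[OF s] unfolding x_def by simp
  then have "x \<in> waiting (r + s)"
    by blast
  moreover have "E (arrivals x) (arrivals (Suc (r + s)))"
    using s arrivals_partner arrivals_future nb cls_in_V unfolding x_def tilded_def by simp
  moreover have "\<not> E (arrivals t) (arrivals (Suc (r + s)))" if "t \<in> waiting (r + s)" "t < x" for t
  proof -
    have "1 \<le> t"
      using that(1) waiting_bounds by blast
    moreover have "x \<le> r"
      using rank_tilded_less[OF s] unfolding x_def by simp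
    ultimately have "t \<in> waiting (r + s) \<inter> {1..r}"
      using that by simp
    then have "rank tilded s < t"
      using inv by blast
    then show ?thesis
      using that(2) unfolding x_def by simp
  qed
  ultimately have step: "waiting (Suc (r + s)) = waiting (r + s) - {x}"
    and matched: "matched_by E arrivals (Suc (r + s)) x (Suc (r + s))"
    using waiting_Suc_matched by blast+
  from matched show "matched_by E arrivals (Suc (r + s)) (Suc (rank tilded s)) (Suc (r + s))"
    unfolding x_def .
  have "waiting (r + Suc s) \<inter> {1..r} = (waiting (r + s) \<inter> {1..r}) - {x}"
    using step by auto
  also have "\<dots> = {y. rank tilded (Suc s) < y \<and> y \<le> r}"
    using inv s unfolding x_def by (auto simp: rank_Suc)
  finally show "waiting (r + Suc s) \<inter> {1..r} = {y. rank tilded (Suc s) < y \<and> y \<le> r}" .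
qed

lemma window_step_plain:
  assumes s: "s < length u" "\<not> tilded s"
    and inv: "waiting (r + s) \<inter> {1..r} = {x. rank tilded s < x \<and> x \<le> r}"
  shows "waiting (r + Suc s) \<inter> {1..r} = {x. rank tilded (Suc s) < x \<and> x \<le> r}"
proof -
  have no_past: "\<not> E (arrivals t) (arrivals (Suc (r + s)))" if "t \<in> waiting (r + s) \<inter> {1..r}" for t
  proof -
    define i where "i = select tilded (t - 1)"
    have "t \<in> {x. rank tilded s < x \<and> x \<le> r}" "t \<in> {1..r}"
      using that inv by blast+
    then have t: "rank tilded s < t" "1 \<le> t" "t \<le> r"
      by simp_all
    then have i: "tilded i" "rank tilded i = t - 1"
      using select_less_rank[of "t - 1" tilded "length u"] unfolding i_def by auto
    have "\<not> i < s"
      using rank_less[of i s tilded] i t by linarith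
    then have "s < i"
      using i(1) s(2) by (cases "i = s") auto
    then have "\<not> E (cls s) (cls i)"
      using not_adjacent_tilded i(1) by blast
    moreover have "arrivals (Suc (r + s)) = cls s" "arrivals t = cls i"
      using s arrivals_future arrivals_past[OF t(2,3)] unfolding i_def tilded_def by auto
    ultimately show ?thesis
      using sym by metis
  qed
  have "waiting (Suc (r + s)) \<inter> {1..r} = waiting (r + s) \<inter> {1..r}"
  proof (cases "r + s" rule: waiting_Suc_cases)
    case stay
    then show ?thesis by simp
  next
    case (match t)
    then have "t \<notin> {1..r}"
      using no_past by blast
    then show ?thesis
      using match(4) by blast
  qed
  also have "\<dots> = {x. rank tilded (Suc s) < x \<and> x \<le> r}"
    using inv s(2) by (simp add: rank_Suc)
  finally show ?thesis
    by simp
qed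

lemma waiting_window: "s \<le> length u \<Longrightarrow> waiting (r + s) \<inter> {1..r} = {x. rank tilded s < x \<and> x \<le> r}"
proof (induction s)
  case 0
  then show ?case
    using waiting_past[of r] by auto
next
  case (Suc s)
  then show ?case
    using window_step_tilded(1) window_step_plain by (cases "tilded s") auto
qed

lemma tilded_partner:
  assumes "tilded i"
  shows "ever_matched E arrivals (Suc (rank tilded i)) (Suc (r + i))"
proof -
  have "i \<le> length u"
    using assms unfolding tilded_def by simp
  then have "matched_by E arrivals (Suc (r + i)) (Suc (rank tilded i)) (Suc (r + i))"
    using window_step_tilded(2)[OF assms waiting_window] by blast
  then show ?thesis
    unfolding ever_matched_def by blast
qed

lemma past_partner:
  assumes "1 \<le> k" "k \<le> r"
  shows "ever_matched E arrivals k l \<longleftrightarrow> l = Suc (r + select tilded (k - 1))"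
proof -
  have "tilded (select tilded (k - 1))" "Suc (rank tilded (select tilded (k - 1))) = k"
    using assms select_less_rank[of "k - 1" tilded "length u"] by auto
  then show ?thesis
    using tilded_partner ever_matched_unique by metis
qed

lemma r_pos: "1 \<le> r"
  using rank_tilded_less[OF tilded_last] by simp

lemma Fdefined_arrivals: "Fdefined E arrivals r"
  unfolding Fdefined_def
proof
  fix p assume "p \<in> set (queue r)"
  then have "fst p \<in> {1..r}"
    using waiting_past[of r] by blast
  then show "\<exists>l. ever_matched E arrivals (fst p) l"
    using past_partner by auto
qed

lemma past_partner_bound:
  assumes "1 \<le> k" "k \<le> r" "ever_matched E arrivals k l"
  shows "l \<le> r + length u"
proof -
  have "select tilded (k - 1) < length u"
    using assms(1,2) select_less_rank(3)[of "k - 1" tilded "length u"] by simp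
  then show ?thesis
    using assms past_partner by simp
qed

lemma jidx_arrivals: "jidx E arrivals r = r + length u"
  unfolding jidx_def
proof (rule Max_eqI)
  let ?S = "{l. \<exists>k. 1 \<le> k \<and> k \<le> r \<and> ever_matched E arrivals k l}"
  have "?S \<subseteq> {..r + length u}"
    using past_partner_bound by blast
  then show "finite ?S"
    using finite_subset by blast
  show "l \<le> r + length u" if "l \<in> ?S" for l
    using that past_partner_bound by blast
  have "Suc (r + (length u - 1)) = r + length u"
    using nonempty by simp
  then have "ever_matched E arrivals (Suc (rank tilded (length u - 1))) (r + length u)"
    using tilded_partner[OF tilded_last] by (simp only:)
  moreover have "Suc (rank tilded (length u - 1)) \<le> r"
    using rank_tilded_less[OF tilded_last] by simp
  ultimately show "r + length u \<in> ?S"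
    by (intro CollectI exI[of _ "Suc (rank tilded (length u - 1))"]) simp
qed

lemma forward_letter_arrivals: "i < length u \<Longrightarrow> forward_letter r (Suc (r + i)) = u ! i"
proof (cases "tilded i")
  case True
  have "forward_letter r (Suc (r + i)) = Ti (arrivals (Suc (rank tilded i)))"
    using forward_letter_matched[of "Suc (rank tilded i)" r] tilded_partner[OF True]
      rank_tilded_less[OF True] by simp
  then have "forward_letter r (Suc (r + i)) = Ti (cls i)"
    using arrivals_partner[OF True] by simp
  moreover have "\<not> is_Pl (u ! i)"
    using True unfolding tilded_def by simp
  ultimately show ?thesis
    using Ti_letter_class by simp
next
  case False
  assume i: "i < length u"
  have "\<not> (\<exists>k. 1 \<le> k \<and> k \<le> r \<and> ever_matched E arrivals k (Suc (r + i)))"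
  proof
    assume "\<exists>k. 1 \<le> k \<and> k \<le> r \<and> ever_matched E arrivals k (Suc (r + i))"
    then obtain k where k: "1 \<le> k" "k \<le> r" "ever_matched E arrivals k (Suc (r + i))"
      by blast
    then have "i = select tilded (k - 1)"
      using past_partner by simp
    moreover have "tilded (select tilded (k - 1))"
      using k select_less_rank(1)[of "k - 1" tilded "length u"] by simp
    ultimately show False
      using False by simp
  qed
  then have "forward_letter r (Suc (r + i)) = Pl (cls i)"
    using forward_letter_unmatched arrivals_future[OF i] False i unfolding tilded_def by simp
  then show ?thesis
    using False i Pl_letter_class unfolding tilded_def by simp
qed

lemma Fstate_arrivals: "Fstate E arrivals r = u"
proof -
  have "queue r \<noteq> []"
    using waiting_past[of r] r_pos by auto
  then have "Fstate E arrivals r = map (forward_letter r) [Suc r..<Suc (r + length u)]"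
    using Fstate_eq jidx_arrivals by simp
  also have "\<dots> = u"
    by (rule nth_equalityI) (simp_all add: forward_letter_arrivals del: upt_Suc)
  finally show ?thesis .
qed

end

lemma F_admissible_realisable:
  assumes "\<And>x y. E x y \<Longrightarrow> E y x" "\<And>x. \<not> E x x"
    and "\<And>b. b \<in> V \<Longrightarrow> nb b \<in> V \<and> E b (nb b)" "V \<noteq> {}"
    and "F_admissible V E u"
  shows "\<exists>v m. (\<forall>i. v i \<in> V) \<and> Fdefined E v m \<and> Fstate E v m = u"
proof (cases "u = []")
  case True
  obtain x where "x \<in> V"
    using assms(4) by blast
  then show ?thesis
    using True by (intro exI[of _ "\<lambda>_. x"] exI[of _ 0]) (simp add: Fdefined_def Fstate_def)
next
  case False
  then interpret F_construction V E nb u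
    using assms by unfold_locales
  show ?thesis
    using arrivals_in_V Fdefined_arrivals Fstate_arrivals by blast
qed

section \<open>Realising backward words\<close>

locale B_construction =
  fixes V :: "'a set" and E :: "'a \<Rightarrow> 'a \<Rightarrow> bool" and nb :: "'a \<Rightarrow> 'a"
    and w :: "'a letter list"
  assumes sym: "E x y \<Longrightarrow> E y x" and irrefl: "\<not> E x x"
    and nb: "b \<in> V \<Longrightarrow> nb b \<in> V \<and> E b (nb b)"
    and admissible: "B_admissible V E w" and nonempty: "w \<noteq> []"
begin

abbreviation cls :: "nat \<Rightarrow> 'a" where
  "cls i \<equiv> letter_class (w ! i)"

definition tilded :: "nat \<Rightarrow> bool" where
  "tilded i \<longleftrightarrow> i < length w \<and> \<not> is_Pl (w ! i)"

abbreviation r :: nat where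
  "r \<equiv> rank tilded (length w)"

lemma cls_in_V: "i < length w \<Longrightarrow> cls i \<in> V"
  using admissible nonempty unfolding B_admissible_def by auto

lemma first_plain: "is_Pl (w ! 0)"
  using admissible nonempty unfolding B_admissible_def by (simp add: hd_conv_nth)

lemma not_adjacent_plain: "i < j \<Longrightarrow> j < length w \<Longrightarrow> is_Pl (w ! i) \<Longrightarrow> \<not> E (cls j) (cls i)"
  using admissible nonempty sym unfolding B_admissible_def sorted_wrt_iff_nth_less by blast

text \<open>
  The auxiliary run \<open>scan\<close> feeds the classes of the tilded letters of \<open>w\<close> from right to left.
  The letters it leaves waiting are pairwise non-adjacent and get partners before the word; the
  pairs it matches are matched with each other inside the word.
\<close>

definition scan_time :: "nat \<Rightarrow> nat" where
  "scan_time p = r - rank tilded p"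

definition scan_pos :: "nat \<Rightarrow> nat" where
  "scan_pos i = select tilded (r - i)"

definition scan_arrivals :: "nat \<Rightarrow> 'a" where
  "scan_arrivals i = cls (scan_pos i)"

lemma rank_tilded_less: "tilded p \<Longrightarrow> rank tilded p < r"
  using rank_less[of p "length w" tilded] unfolding tilded_def by simp

lemma scan_time_bounds: "tilded p \<Longrightarrow> 1 \<le> scan_time p \<and> scan_time p \<le> r"
  using rank_tilded_less unfolding scan_time_def by fastforce

lemma scan_pos_time: "tilded p \<Longrightarrow> scan_pos (scan_time p) = p"
  using rank_tilded_less select_rank unfolding scan_pos_def scan_time_def
  by (metis diff_diff_cancel less_imp_le_nat)

lemma scan_time_pos: "1 \<le> i \<Longrightarrow> i \<le> r \<Longrightarrow> tilded (scan_pos i) \<and> scan_time (scan_pos i) = i"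
  using select_less_rank(1,2)[of "r - i" tilded "length w"] unfolding scan_pos_def scan_time_def
  by simp

lemma scan_time_less_iff:
  assumes "tilded p" "tilded q"
  shows "scan_time p < scan_time q \<longleftrightarrow> q < p"
proof -
  have "rank tilded p < r" "rank tilded q < r" "rank tilded q < rank tilded p \<longleftrightarrow> q < p"
    using assms rank_tilded_less rank_less_iff by blast+
  then show ?thesis
    unfolding scan_time_def by linarith
qed

lemma scan_arrivals_time: "tilded p \<Longrightarrow> scan_arrivals (scan_time p) = cls p"
  unfolding scan_arrivals_def by (simp add: scan_pos_time)

sublocale scan: fcfm E scan_arrivals
  using sym irrefl by unfold_locales

definition unpaired :: "nat \<Rightarrow> bool" where
  "unpaired p \<longleftrightarrow> tilded p \<and> scan_time p \<in> scan.waiting r"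

abbreviation paired :: "nat \<Rightarrow> bool" where
  "paired p \<equiv> tilded p \<and> \<not> unpaired p"

definition partner :: "nat \<Rightarrow> nat" where
  "partner p = scan_pos (THE l. matched_by E scan_arrivals r (scan_time p) l)"

lemma partner_matched:
  assumes "paired p"
  shows "matched_by E scan_arrivals r (scan_time p) (scan_time (partner p))"
    and "tilded (partner p)" "partner p \<noteq> p"
proof -
  have "scan_time p \<notin> scan.waiting r"
    using assms unfolding unpaired_def by blast
  then obtain l where l: "matched_by E scan_arrivals r (scan_time p) l"
    using assms scan_time_bounds scan.waiting_iff_unmatched by blast
  then have "(THE l. matched_by E scan_arrivals r (scan_time p) l) = l"
    using scan.matched_by_unique by blast
  moreover have "1 \<le> l" "l \<le> r" "l \<noteq> scan_time p"
    using l scan.matched_by_bounds scan.match_arrival unfolding matched_by_def by fastforce+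
  ultimately show "matched_by E scan_arrivals r (scan_time p) (scan_time (partner p))"
    and "tilded (partner p)" "partner p \<noteq> p"
    using l scan_time_pos unfolding partner_def by metis+
qed

lemma partner_paired: "paired p \<Longrightarrow> paired (partner p) \<and> partner (partner p) = p"
proof -
  assume p: "paired p"
  note m = partner_matched[OF p]
  have swapped: "matched_by E scan_arrivals r (scan_time (partner p)) (scan_time p)"
    using m(1) scan.matched_by_sym by blast
  have "1 \<le> scan_time (partner p)" "scan_time (partner p) \<le> r"
    using m(2) scan_time_bounds by blast+
  then have "\<not> unpaired (partner p)"
    using swapped scan.waiting_iff_unmatched unfolding unpaired_def by blast
  moreover have "(THE l. matched_by E scan_arrivals r (scan_time (partner p)) l) = scan_time p"
    using swapped scan.matched_by_unique by blast
  ultimately show ?thesis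
    using m(2) p scan_pos_time unfolding partner_def by simp
qed

lemma unpaired_independent: "unpaired p \<Longrightarrow> unpaired q \<Longrightarrow> \<not> E (cls p) (cls q)"
  using scan.waiting_independent scan_arrivals_time unfolding unpaired_def by metis

lemma partner_adjacent: "paired s \<Longrightarrow> E (cls s) (cls (partner s))"
proof -
  assume s: "paired s"
  note m = partner_matched[OF s]
  have "E (scan_arrivals (scan_time s)) (scan_arrivals (scan_time (partner s)))"
    using m(1) scan.match_arrival sym unfolding matched_by_def by blast
  then show ?thesis
    using s m(2) scan_arrivals_time by simp
qed

lemma unpaired_not_adjacent_partner:
  assumes s: "paired s" and q: "unpaired q" "s < q"
  shows "\<not> E (cls q) (cls (partner s))"
proof -
  note m = partner_matched[OF s]
  have "scan_time q < scan_time s"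
    using s q scan_time_less_iff unfolding unpaired_def by blast
  moreover have "scan_time s \<le> r" "scan_time (partner s) \<le> r"
    using s m(2) scan_time_bounds by blast+
  then have "max (scan_time s) (scan_time (partner s)) - 1 \<le> r"
    by simp
  moreover have "scan_time q \<le> max (scan_time s) (scan_time (partner s)) - 1"
    using \<open>scan_time q < scan_time s\<close> by simp
  ultimately have "scan_time q \<in> scan.waiting (max (scan_time s) (scan_time (partner s)) - 1)"
    using q scan.waiting_earlier unfolding unpaired_def by blast
  then show ?thesis
    using scan.match_partner_not_adjacent[OF m(1)] \<open>scan_time q < scan_time s\<close>
      q s m(2) scan_arrivals_time unfolding unpaired_def by metis
qed

lemma first_not_adjacent_partner:
  assumes p: "paired p" and s: "paired s"
    and order: "p < s" "p < partner s" "s < partner p"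
  shows "\<not> E (cls (partner p)) (cls (partner s))"
proof -
  note ms = partner_matched[OF s] and mp = partner_matched[OF p]
  have times: "scan_time (partner p) < scan_time s" "scan_time s < scan_time p"
    "scan_time (partner s) < scan_time p"
    using order p s ms(2) mp(2) scan_time_less_iff by blast+
  then have "(scan_time (partner p), scan_time p) \<in> set (scan.matches r)"
    using mp(1) scan.match_arrival unfolding matched_by_def by fastforce
  then have "scan_time (partner p) \<in> scan.waiting (max (scan_time s) (scan_time (partner s)) - 1)"
    using times by (intro scan.waiting_until_matched) auto
  then show ?thesis
    using scan.match_partner_not_adjacent[OF ms(1)] times(1) s ms(2) mp(2) scan_arrivals_time
    by metis
qed

abbreviation K :: nat where
  "K \<equiv> rank unpaired (length w)"

text \<open>
  Items \<open>1..K\<close> are the partners of the unpaired letters, in order; item \<open>K + 1 + i\<close> carries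
  letter \<open>i\<close> of \<open>w\<close>, with the class of that letter if it is untilded, a neighbour of it if it
  is unpaired, and the class of its partner letter if it is paired.
\<close>

definition window_class :: "nat \<Rightarrow> 'a" where
  "window_class i =
     (if is_Pl (w ! i) then cls i else if unpaired i then nb (cls i) else cls (partner i))"

definition arrivals :: "nat \<Rightarrow> 'a" where
  "arrivals t =
     (if 1 \<le> t \<and> t \<le> K then cls (select unpaired (t - 1))
      else if K < t \<and> t \<le> K + length w then window_class (t - K - 1)
      else cls 0)"

lemma unpaired_tilded: "unpaired p \<Longrightarrow> tilded p"
  unfolding unpaired_def by blast

lemma tilded_less: "tilded p \<Longrightarrow> p < length w"
  unfolding tilded_def by blast

lemma rank_unpaired_less: "unpaired q \<Longrightarrow> rank unpaired q < K"
  using rank_less[of q "length w" unpaired] unpaired_tilded tilded_less by blast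

lemma arrivals_prefix: "1 \<le> t \<Longrightarrow> t \<le> K \<Longrightarrow> arrivals t = cls (select unpaired (t - 1))"
  unfolding arrivals_def by simp

lemma arrivals_window: "i < length w \<Longrightarrow> arrivals (Suc (K + i)) = window_class i"
  unfolding arrivals_def by simp

lemma arrivals_unpaired: "unpaired q \<Longrightarrow> arrivals (Suc (rank unpaired q)) = cls q"
  using arrivals_prefix[of "Suc (rank unpaired q)"] rank_unpaired_less[of q] select_rank[of unpaired q]
  by simp

lemma window_class_partner: "paired i \<Longrightarrow> window_class (partner i) = cls i"
  using partner_paired partner_matched(2) unfolding window_class_def tilded_def by auto

lemma arrivals_in_V: "arrivals t \<in> V"
proof -
  have "select unpaired (t - 1) < length w" if "1 \<le> t" "t \<le> K"
    using that select_less_rank(3)[of "t - 1" unpaired "length w"] by simp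
  moreover have "window_class i \<in> V" if "i < length w" for i
    using that cls_in_V nb partner_matched(2) tilded_less unfolding window_class_def tilded_def
    by auto
  ultimately show ?thesis
    unfolding arrivals_def using cls_in_V nonempty by auto
qed

sublocale fcfm E arrivals
  using sym irrefl by unfold_locales

lemma waiting_prefix: "t \<le> K \<Longrightarrow> waiting t = {1..t}"
proof (induction t)
  case (Suc t)
  have "\<not> E (arrivals x) (arrivals (Suc t))" if "x \<in> {1..t}" for x
  proof -
    have "x - 1 < t" "t < K"
      using that Suc.prems by auto
    then have "unpaired (select unpaired (x - 1))" "unpaired (select unpaired t)"
      using select_less_rank(1)[of _ unpaired "length w"] by simp_all
    then show ?thesis
      using that Suc.prems arrivals_prefix unpaired_independent by simp
  qed
  moreover have "waiting t = {1..t}"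
    using Suc by simp
  ultimately have "waiting (Suc t) = insert (Suc t) (waiting t)"
    by (intro waiting_Suc_unmatched ballI) auto
  then show ?case
    using \<open>waiting t = {1..t}\<close> by (simp add: atLeastAtMostSuc_conv)
qed simp

definition still_waiting :: "nat \<Rightarrow> nat \<Rightarrow> bool" where
  "still_waiting s i \<longleftrightarrow> i < s \<and> (is_Pl (w ! i) \<or> (paired i \<and> s \<le> partner i))"

definition expected_waiting :: "nat \<Rightarrow> nat set" where
  "expected_waiting s =
     {x. rank unpaired s < x \<and> x \<le> K} \<union> (\<lambda>i. Suc (K + i)) ` {i. still_waiting s i}"

lemma expected_waiting_cases:
  assumes "x \<in> expected_waiting s" "s \<le> length w"
  obtains (prefix) q where "unpaired q" "s \<le> q" "x = Suc (rank unpaired q)" "arrivals x = cls q"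
  | (plain) i where "i < s" "is_Pl (w ! i)" "x = Suc (K + i)" "arrivals x = cls i"
  | (first) i where "i < s" "paired i" "s \<le> partner i" "x = Suc (K + i)"
      "arrivals x = cls (partner i)"
proof (cases "x \<le> K")
  case True
  define q where "q = select unpaired (x - 1)"
  have x: "rank unpaired s < x" "1 \<le> x"
    using assms(1) True unfolding expected_waiting_def by auto
  then have q: "unpaired q" "rank unpaired q = x - 1"
    using True select_less_rank[of "x - 1" unpaired "length w"] unfolding q_def by auto
  moreover have "s \<le> q"
    using rank_less[of q s unpaired] q x by linarith
  ultimately show ?thesis
    using prefix x arrivals_unpaired[OF q(1)] by simp
next
  case False
  then obtain i where i: "still_waiting s i" "x = Suc (K + i)"
    using assms(1) unfolding expected_waiting_def by auto
  then have "i < length w"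
    using assms(2) unfolding still_waiting_def by simp
  then have arr: "arrivals x = window_class i"
    using i(2) arrivals_window by simp
  consider "is_Pl (w ! i)" | "paired i" "s \<le> partner i"
    using i(1) unfolding still_waiting_def by blast
  then show ?thesis
  proof cases
    case 1
    then show ?thesis
      using i arr by (intro plain[of i]) (auto simp: still_waiting_def window_class_def)
  next
    case 2
    then show ?thesis
      using i arr by (intro first[of i]) (auto simp: still_waiting_def window_class_def tilded_def)
  qed
qed

lemma still_waiting_Suc:
  "still_waiting (Suc s) i \<longleftrightarrow>
     (still_waiting s i \<and> \<not> (paired i \<and> partner i = s)) \<or>
     (i = s \<and> (is_Pl (w ! s) \<or> (paired s \<and> s < partner s)))"
  unfolding still_waiting_def by (auto simp: less_Suc_eq tilded_def)

lemma expected_waiting_Suc_arrives: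
  assumes "is_Pl (w ! s) \<or> (paired s \<and> s < partner s)"
  shows "expected_waiting (Suc s) = insert (Suc (K + s)) (expected_waiting s)"
proof -
  have "\<not> unpaired s"
    using assms unpaired_tilded unfolding tilded_def by blast
  then have "rank unpaired (Suc s) = rank unpaired s"
    by (simp add: rank_Suc)
  moreover have "\<not> (paired i \<and> partner i = s)" if "still_waiting s i" for i
  proof
    assume "paired i \<and> partner i = s"
    then have "paired s" "partner s = i"
      using partner_paired by metis+
    then show False
      using that assms unfolding still_waiting_def tilded_def by auto
  qed
  then have "{i. still_waiting (Suc s) i} = insert s {i. still_waiting s i}"
    using assms by (auto simp: still_waiting_Suc)
  ultimately show ?thesis
    unfolding expected_waiting_def by auto
qed

lemma expected_waiting_Suc_unpaired:
  assumes "unpaired s"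
  shows "expected_waiting (Suc s) = expected_waiting s - {Suc (rank unpaired s)}"
proof -
  have "\<not> (paired i \<and> partner i = s)" for i
    using assms partner_paired by metis
  moreover have "\<not> is_Pl (w ! s)"
    using assms unpaired_tilded unfolding tilded_def by blast
  ultimately have "{i. still_waiting (Suc s) i} = {i. still_waiting s i}"
    using assms by (auto simp: still_waiting_Suc)
  moreover have "rank unpaired (Suc s) = Suc (rank unpaired s)"
    using assms by (simp add: rank_Suc)
  moreover have "Suc (rank unpaired s) \<le> K"
    using rank_unpaired_less[OF assms] by simp
  ultimately show ?thesis
    unfolding expected_waiting_def by auto
qed

lemma expected_waiting_Suc_second:
  assumes "paired s" "partner s < s"
  shows "expected_waiting (Suc s) = expected_waiting s - {Suc (K + partner s)}"
proof -
  have "paired i \<and> partner i = s \<longleftrightarrow> i = partner s" for i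
    using assms partner_paired by metis
  moreover have "\<not> is_Pl (w ! s)"
    using assms unfolding tilded_def by blast
  ultimately have "{i. still_waiting (Suc s) i} = {i. still_waiting s i} - {partner s}"
    using assms(2) by (auto simp: still_waiting_Suc)
  then have "(\<lambda>i. Suc (K + i)) ` {i. still_waiting (Suc s) i}
      = (\<lambda>i. Suc (K + i)) ` {i. still_waiting s i} - {Suc (K + partner s)}"
    by (simp add: image_set_diff inj_def)
  moreover have "rank unpaired (Suc s) = rank unpaired s"
    using assms by (simp add: rank_Suc)
  ultimately show ?thesis
    unfolding expected_waiting_def by auto
qed

lemma plain_arrival_not_adjacent:
  assumes s: "is_Pl (w ! s)" "s < length w" and x: "x \<in> expected_waiting s"
  shows "\<not> E (arrivals x) (cls s)"
  using x less_imp_le[OF s(2)]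
proof (cases rule: expected_waiting_cases)
  case (prefix q)
  then have "q \<noteq> s" "q < length w"
    using s(1) unpaired_tilded tilded_less unfolding tilded_def by blast+
  then have "s < q" "q < length w"
    using prefix by simp_all
  then show ?thesis
    using prefix s not_adjacent_plain by simp
next
  case (plain i)
  then show ?thesis
    using s not_adjacent_plain sym by metis
next
  case (first i)
  then have "partner i \<noteq> s" "partner i < length w"
    using s(1) partner_matched(2) unfolding tilded_def by blast+
  then have "s < partner i" "partner i < length w"
    using first by simp_all
  then show ?thesis
    using first s not_adjacent_plain by simp
qed

lemma first_arrival_not_adjacent:
  assumes s: "paired s" "s < partner s" and x: "x \<in> expected_waiting s"
  shows "\<not> E (arrivals x) (cls (partner s))"
  using x less_imp_le[OF tilded_less[OF s(1)[THEN conjunct1]]]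
proof (cases rule: expected_waiting_cases)
  case (prefix q)
  then have "s < q"
    using s(1) by (metis le_neq_implies_less)
  then show ?thesis
    using prefix s unpaired_not_adjacent_partner by simp
next
  case (plain i)
  then show ?thesis
    using s not_adjacent_plain[of i "partner s"] partner_matched(2) tilded_less sym by fastforce
next
  case (first i)
  then have "partner i \<noteq> s"
    using s partner_paired by (metis not_less_iff_gr_or_eq)
  then have "s < partner i"
    using first by simp
  then show ?thesis
    using first s first_not_adjacent_partner[of i s] by simp
qed

lemma second_arrival_not_adjacent:
  assumes s: "paired s" "partner s < s"
    and x: "x \<in> expected_waiting s" "x < Suc (K + partner s)"
  shows "\<not> E (arrivals x) (cls (partner s))"
  using x(1) less_imp_le[OF tilded_less[OF s(1)[THEN conjunct1]]]
proof (cases rule: expected_waiting_cases)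
  case (prefix q)
  then have "s < q"
    using s(1) by (metis le_neq_implies_less)
  then show ?thesis
    using prefix s unpaired_not_adjacent_partner by simp
next
  case (plain i)
  then have "i < partner s"
    using x(2) by simp
  then show ?thesis
    using plain s not_adjacent_plain[of i "partner s"] partner_matched(2) tilded_less sym by metis
next
  case (first i)
  then have "i < partner s"
    using x(2) by simp
  have "partner i \<noteq> s"
  proof
    assume "partner i = s"
    then have "partner s = i"
      using first(2) partner_paired by metis
    then show False
      using \<open>i < partner s\<close> by simp
  qed
  then have "s < partner i"
    using first by simp
  then show ?thesis
    using first s \<open>i < partner s\<close> first_not_adjacent_partner[of i s] by simp
qed

lemma window_step_arrives:
  assumes s: "s < length w" "is_Pl (w ! s) \<or> (paired s \<and> s < partner s)"
    and inv: "waiting (K + s) = expected_waiting s"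
  shows "waiting (K + Suc s) = expected_waiting (Suc s)"
proof -
  have "\<not> E (arrivals x) (arrivals (Suc (K + s)))" if "x \<in> waiting (K + s)" for x
    using s that plain_arrival_not_adjacent first_arrival_not_adjacent
    unfolding inv arrivals_window[OF s(1)] window_class_def tilded_def by auto
  then have "waiting (Suc (K + s)) = insert (Suc (K + s)) (waiting (K + s))"
    using waiting_Suc_unmatched by blast
  then show ?thesis
    using expected_waiting_Suc_arrives[OF s(2)] inv by simp
qed

lemma window_step_unpaired:
  assumes s: "unpaired s" and inv: "waiting (K + s) = expected_waiting s"
  shows "waiting (K + Suc s) = expected_waiting (Suc s)"
    and "matched_by E arrivals (K + Suc s) (Suc (rank unpaired s)) (Suc (K + s))"
proof -
  define x where "x = Suc (rank unpaired s)"
  have "x \<le> K"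
    using rank_unpaired_less[OF s] unfolding x_def by simp
  then have "x \<in> waiting (K + s)"
    unfolding inv expected_waiting_def x_def by simp
  moreover have "E (arrivals x) (arrivals (Suc (K + s)))"
    using s arrivals_unpaired arrivals_window nb cls_in_V unpaired_tilded tilded_less
    unfolding x_def window_class_def tilded_def by simp
  moreover have "\<forall>t\<in>waiting (K + s). t < x \<longrightarrow> \<not> E (arrivals t) (arrivals (Suc (K + s)))"
    using \<open>x \<le> K\<close> unfolding inv expected_waiting_def x_def by auto
  ultimately have "waiting (Suc (K + s)) = waiting (K + s) - {x}"
    and "matched_by E arrivals (Suc (K + s)) x (Suc (K + s))"
    using waiting_Suc_matched by blast+
  then show "waiting (K + Suc s) = expected_waiting (Suc s)"
    and "matched_by E arrivals (K + Suc s) (Suc (rank unpaired s)) (Suc (K + s))"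
    using expected_waiting_Suc_unpaired[OF s] inv unfolding x_def by simp_all
qed

lemma window_step_second:
  assumes s: "paired s" "partner s < s" and inv: "waiting (K + s) = expected_waiting s"
  shows "waiting (K + Suc s) = expected_waiting (Suc s)"
    and "matched_by E arrivals (K + Suc s) (Suc (K + partner s)) (Suc (K + s))"
proof -
  define y where "y = Suc (K + partner s)"
  have "still_waiting s (partner s)"
    using s partner_paired unfolding still_waiting_def by simp
  then have "y \<in> waiting (K + s)"
    unfolding inv expected_waiting_def y_def by blast
  moreover have "E (arrivals y) (arrivals (Suc (K + s)))"
    using s partner_adjacent window_class_partner arrivals_window partner_matched(2) tilded_less sym
    unfolding y_def window_class_def tilded_def by auto
  moreover have "\<forall>t\<in>waiting (K + s). t < y \<longrightarrow> \<not> E (arrivals t) (arrivals (Suc (K + s)))"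
    using s second_arrival_not_adjacent arrivals_window tilded_less
    unfolding inv y_def window_class_def tilded_def by auto
  ultimately have "waiting (Suc (K + s)) = waiting (K + s) - {y}"
    and "matched_by E arrivals (Suc (K + s)) y (Suc (K + s))"
    using waiting_Suc_matched by blast+
  then show "waiting (K + Suc s) = expected_waiting (Suc s)"
    and "matched_by E arrivals (K + Suc s) (Suc (K + partner s)) (Suc (K + s))"
    using expected_waiting_Suc_second[OF s] inv unfolding y_def by simp_all
qed

lemma waiting_window: "s \<le> length w \<Longrightarrow> waiting (K + s) = expected_waiting s"
proof (induction s)
  case 0
  have "expected_waiting 0 = {1..K}"
    unfolding expected_waiting_def still_waiting_def by auto
  then show ?case
    using waiting_prefix by simp
next
  case (Suc s)
  then have s: "s < length w" and inv: "waiting (K + s) = expected_waiting s"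
    by simp_all
  consider "is_Pl (w ! s) \<or> (paired s \<and> s < partner s)" | "unpaired s"
    | "paired s" "partner s < s"
    using s partner_matched(3) unfolding tilded_def by (metis linorder_neqE_nat)
  then show ?case
    using window_step_arrives[OF s _ inv] window_step_unpaired(1)[OF _ inv]
      window_step_second(1)[OF _ _ inv] by cases blast+
qed

lemma unpaired_matched:
  assumes "unpaired i"
  shows "matched_by E arrivals (K + length w) (Suc (K + i)) (Suc (rank unpaired i))"
proof -
  have "i < length w"
    using assms unpaired_tilded tilded_less by blast
  then have "matched_by E arrivals (K + Suc i) (Suc (rank unpaired i)) (Suc (K + i))"
    using window_step_unpaired(2)[OF assms waiting_window] by simp
  then show ?thesis
    using \<open>i < length w\<close> matched_by_mono matched_by_sym by simp
qed

lemma paired_matched: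
  assumes "paired i"
  shows "matched_by E arrivals (K + length w) (Suc (K + i)) (Suc (K + partner i))"
proof (cases "partner i < i")
  case True
  have "i < length w"
    using assms tilded_less by blast
  then have "matched_by E arrivals (K + Suc i) (Suc (K + partner i)) (Suc (K + i))"
    using window_step_second(2)[OF assms True waiting_window] by simp
  then show ?thesis
    using \<open>i < length w\<close> matched_by_mono matched_by_sym by simp
next
  case False
  moreover have "partner i \<noteq> i"
    using partner_matched(3)[OF assms] .
  ultimately have "i < partner i"
    by simp
  moreover have pi: "paired (partner i)" "partner (partner i) = i" "partner i < length w"
    using assms partner_paired partner_matched(2) tilded_less by blast+
  ultimately have "matched_by E arrivals (K + Suc (partner i)) (Suc (K + i)) (Suc (K + partner i))"
    using window_step_second(2)[OF pi(1) _ waiting_window] by simp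
  then show ?thesis
    using pi(3) matched_by_mono by simp
qed

lemma backward_letter_arrivals:
  assumes "i < length w"
  shows "backward_letter (K + length w) (Suc (K + i)) = w ! i"
proof (cases "is_Pl (w ! i)")
  case True
  then have "Suc (K + i) \<in> waiting (K + length w)"
    using assms waiting_window[of "length w"] unfolding expected_waiting_def still_waiting_def by auto
  then have "\<not> (\<exists>l. matched_by E arrivals (K + length w) (Suc (K + i)) l)"
    using waiting_iff_unmatched[of "Suc (K + i)" "K + length w"] assms by simp
  then show ?thesis
    using True assms backward_letter_unmatched arrivals_window Pl_letter_class
    unfolding window_class_def by simp
next
  case False
  then have i: "tilded i"
    using assms unfolding tilded_def by simp
  show ?thesis
  proof (cases "unpaired i")
    case True
    then have "backward_letter (K + length w) (Suc (K + i)) = Ti (arrivals (Suc (rank unpaired i)))"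
      using unpaired_matched backward_letter_matched by blast
    then show ?thesis
      using True False arrivals_unpaired Ti_letter_class by simp
  next
    case nu: False
    then have "backward_letter (K + length w) (Suc (K + i)) = Ti (arrivals (Suc (K + partner i)))"
      using i paired_matched backward_letter_matched by blast
    then show ?thesis
      using i nu False window_class_partner arrivals_window partner_matched(2) tilded_less
        Ti_letter_class by simp
  qed
qed

lemma hd_queue_arrivals: "queue (K + length w) \<noteq> [] \<and> fst (hd (queue (K + length w))) = Suc K"
proof -
  have "still_waiting (length w) 0"
    using first_plain nonempty unfolding still_waiting_def by simp
  then have "Suc K \<in> waiting (K + length w)"
    unfolding waiting_window[OF order.refl] expected_waiting_def by force
  then have ne: "queue (K + length w) \<noteq> []" and "fst (hd (queue (K + length w))) \<le> Suc K"
    using hd_queue_le by auto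
  moreover have "Suc K \<le> x" if "x \<in> waiting (K + length w)" for x
    using that unfolding waiting_window[OF order.refl] expected_waiting_def by auto
  then have "Suc K \<le> fst (hd (queue (K + length w)))"
    using ne by simp
  ultimately show ?thesis
    by simp
qed

lemma Bstate_arrivals: "Bstate E arrivals (K + length w) = w"
proof -
  have "Bstate E arrivals (K + length w) = map (backward_letter (K + length w)) [Suc K..<Suc (K + length w)]"
    using Bstate_eq hd_queue_arrivals by simp
  also have "\<dots> = w"
    by (rule nth_equalityI) (simp_all add: backward_letter_arrivals del: upt_Suc)
  finally show ?thesis .
qed

end

lemma B_admissible_realisable:
  assumes "\<And>x y. E x y \<Longrightarrow> E y x" "\<And>x. \<not> E x x"
    and "\<And>b. b \<in> V \<Longrightarrow> nb b \<in> V \<and> E b (nb b)" "V \<noteq> {}"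
    and "B_admissible V E w"
  shows "\<exists>v n. (\<forall>i. v i \<in> V) \<and> Bstate E v n = w"
proof (cases "w = []")
  case True
  obtain x where "x \<in> V"
    using assms(4) by blast
  then show ?thesis
    using True by (intro exI[of _ "\<lambda>_. x"] exI[of _ 0]) (simp add: Bstate_def)
next
  case False
  then interpret B_construction V E nb w
    using assms by unfold_locales
  show ?thesis
    using arrivals_in_V Bstate_arrivals by blast
qed

section \<open>The bijection\<close>

lemma admB_eq:
  assumes "\<And>x y. E x y \<Longrightarrow> E y x" "\<And>x. \<not> E x x"
    and "\<And>b. b \<in> V \<Longrightarrow> \<exists>c\<in>V. E b c" "V \<noteq> {}"
  shows "admB V E = {w. B_admissible V E w}"
proof -
  obtain nb where nb: "\<And>b. b \<in> V \<Longrightarrow> nb b \<in> V \<and> E b (nb b)"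
    using assms(3) by metis
  have "B_admissible V E (Bstate E v n)" if "\<forall>i. v i \<in> V" for v n
  proof -
    interpret fcfm E v
      using assms(1,2) by unfold_locales
    show ?thesis
      using that B_admissible_Bstate by blast
  qed
  moreover have "\<exists>v n. (\<forall>i. v i \<in> V) \<and> Bstate E v n = w" if "B_admissible V E w" for w
    using B_admissible_realisable[OF assms(1,2) nb assms(4) that] .
  ultimately show ?thesis
    unfolding admB_def by auto
qed

lemma admF_eq:
  assumes "\<And>x y. E x y \<Longrightarrow> E y x" "\<And>x. \<not> E x x"
    and "\<And>b. b \<in> V \<Longrightarrow> \<exists>c\<in>V. E b c" "V \<noteq> {}"
  shows "admF V E = {u. F_admissible V E u}"
proof -
  obtain nb where nb: "\<And>b. b \<in> V \<Longrightarrow> nb b \<in> V \<and> E b (nb b)"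
    using assms(3) by metis
  have "F_admissible V E (Fstate E v n)" if "\<forall>i. v i \<in> V" "Fdefined E v n" for v n
  proof -
    interpret fcfm E v
      using assms(1,2) by unfold_locales
    show ?thesis
      using that F_admissible_Fstate by blast
  qed
  moreover have "\<exists>v n. (\<forall>i. v i \<in> V) \<and> Fdefined E v n \<and> Fstate E v n = u"
    if "F_admissible V E u" for u
    using F_admissible_realisable[OF assms(1,2) nb assms(4) that] .
  ultimately show ?thesis
    unfolding admF_def by auto
qed

lemma simple_connected_graph_neighbour:
  assumes "simple_connected_graph V E" "card V \<ge> 2" "b \<in> V"
  shows "\<exists>c\<in>V. E b c"
proof -
  have "\<not> V \<subseteq> {b}"
  proof
    assume "V \<subseteq> {b}"
    then have "card V \<le> 1"
      using card_mono[of "{b}" V] by simp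
    then show False
      using assms(2) by simp
  qed
  then obtain y where y: "y \<in> V" "y \<noteq> b"
    by blast
  then have "E\<^sup>*\<^sup>* b y"
    using assms(1,3) unfolding simple_connected_graph_def by blast
  then show ?thesis
    using y assms(1) unfolding simple_connected_graph_def
    by (cases rule: converse_rtranclpE) blast+
qed

lemma bij_betw_involution:
  assumes "\<And>x. f (f x) = x" "\<And>x. x \<in> A \<longleftrightarrow> f x \<in> B"
  shows "bij_betw f A B"
  by (rule bij_betw_byWitness[where f' = f]) (use assms in auto)

theorem mainTheorem4:
  fixes V :: "'a set" and E :: "'a \<Rightarrow> 'a \<Rightarrow> bool"
  assumes "simple_connected_graph V E"
    and "card V \<ge> 2"
  shows "bij_betw (\<lambda>w. rev (map tilde w)) (admB V E) (admF V E)
         \<and> (\<forall>w. w \<in> admB V E \<longleftrightarrow> rev (map tilde w) \<in> admF V E)"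
proof -
  have sym: "\<And>x y. E x y \<Longrightarrow> E y x" and irrefl: "\<And>x. \<not> E x x" and "V \<noteq> {}"
    using assms(1) unfolding simple_connected_graph_def by auto
  note neighbour = simple_connected_graph_neighbour[OF assms]
  note adm_eqs = admB_eq[where E = E and V = V, OF sym irrefl neighbour \<open>V \<noteq> {}\<close>]
    admF_eq[where E = E and V = V, OF sym irrefl neighbour \<open>V \<noteq> {}\<close>]
  from adm_eqs have iff: "w \<in> admB V E \<longleftrightarrow> rev (map tilde w) \<in> admF V E" for w
    using B_admissible_iff_F_admissible[OF sym] by simp
  have "rev (map tilde (rev (map tilde w))) = w" for w :: "'a letter list"
    by (simp add: rev_map comp_def)
  then show ?thesis
    using iff bij_betw_involution[of "\<lambda>w. rev (map tilde w)"] by blast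
qed

end
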